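(* Let $k \ge 1$ and $0 \le j \le k$. The number of binary words (of any length, including the empty word) that avoid $0^i1^{k-i}$ for all $i \in \{0,1,\dots,k\}$ and contain exactly $j$ zeros equals the ballot number $T(k, j+1) = \frac{k-j}{k+1}\binom{k+j+1}{k}$.
   Context: A binary word avoids a word $u$ if $u$ does not occur in it as a (not necessarily contiguous) subsequence. $0^i$ denotes $i$ consecutive zeros and $1^i$ denotes $i$ consecutive ones. The ballot numbers are $T(n,k) = \frac{n-k+1}{n+1}\binom{n+k}{n}$. *)

theory Defs
  imports Complex_Main "HOL-Library.Sublist"
begin

definition binary_word :: "nat list \<Rightarrow> bool" where
  "binary_word w \<longleftrightarrow> set w \<subseteq> {0, 1}"

definition avoids :: "nat list \<Rightarrow> nat list \<Rightarrow> bool" where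
  "avoids w u \<longleftrightarrow> \<not> subseq u w"

definition ballot :: "nat \<Rightarrow> nat \<Rightarrow> real" where
  "ballot n k = (real n - real k + 1) / (real n + 1) * real ((n + k) choose n)"

end

theory Submission
  imports Defs
begin

text \<open>
  Let \<open>a(k, j)\<close> count the binary words with \<open>j\<close> zeros and no sorted subsequence of length \<open>k\<close>.
  Classifying such a word by its last letter: \<open>w 1\<close> is admissible for \<open>k + 1\<close> iff \<open>w\<close> is admissible
  for \<open>k\<close>, and \<open>w 0\<close> is admissible for \<open>k + 1\<close> iff \<open>w\<close> is and has fewer than \<open>k\<close> zeros.
  Hence \<open>a(k + 1, j + 1) = a(k + 1, j) + a(k, j + 1)\<close> for \<open>j < k\<close>, \<open>a(k + 1, 0) = a(k, 0) + 1\<close> and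
  \<open>a(k, k) = 0\<close>. Writing \<open>T(n, k + 1) = C(n + k + 1, k + 1) - C(n + k + 1, k)\<close>, Pascal's rule shows
  that the ballot numbers obey the same recurrence with the same boundary values.
\<close>

lemma subseq_replicate_iff_le_count:
  "subseq (replicate n a) w \<longleftrightarrow> n \<le> count_list w a"
proof (induction w arbitrary: n)
  case Nil
  show ?case by (cases n) simp_all
next
  case (Cons x w)
  show ?case
  proof (cases n)
    case (Suc m)
    then show ?thesis using Cons.IH[of m] Cons.IH[of n] by (cases "x = a") auto
  qed simp
qed

lemma subseq_snoc_neq_iff:
  assumes "a \<noteq> b"
  shows "subseq (xs @ [b]) (ys @ [a]) \<longleftrightarrow> subseq (xs @ [b]) ys"
proof
  assume "subseq (xs @ [b]) (ys @ [a])"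
  then obtain us vs where "xs @ [b] = us @ vs" "subseq us ys" "subseq vs [a]"
    by (auto elim: subseq_appendE)
  moreover from \<open>subseq vs [a]\<close> have "vs = [] \<or> vs = [a]"
    by (cases vs) (auto split: if_splits)
  ultimately show "subseq (xs @ [b]) ys"
    using assms by auto
qed (rule subseq_rev_drop_many)

lemma Suc_times_choose_Suc: "Suc k * (n choose Suc k) = (n - k) * (n choose k)"
  using binomial_absorb_comp binomial_absorption by presburger

lemma ballot_Suc_eq_choose_diff:
  "ballot n (Suc k) = real ((n + Suc k) choose Suc k) - real ((n + Suc k) choose k)"
proof -
  define N where "N = n + Suc k"
  have sym: "N choose n = N choose Suc k"
    unfolding N_def using binomial_symmetric[of n "n + Suc k"] by simp
  have "Suc k * (N choose Suc k) = Suc n * (N choose k)"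
    unfolding N_def Suc_times_choose_Suc by simp
  then have "(real k + 1) * real (N choose Suc k) = (real n + 1) * real (N choose k)"
    by (metis of_nat_Suc of_nat_mult add.commute)
  then show ?thesis
    unfolding ballot_def N_def[symmetric] sym by (simp add: field_simps)
qed

lemma ballot_one: "ballot n (Suc 0) = real n"
  using ballot_Suc_eq_choose_diff[of n 0] by simp

lemma ballot_diagonal: "ballot n (Suc n) = 0"
  unfolding ballot_def by simp

lemma ballot_Suc_Suc:
  "ballot (Suc k) (Suc (Suc j)) = ballot (Suc k) (Suc j) + ballot k (Suc (Suc j))"
  unfolding ballot_Suc_eq_choose_diff by simp

definition sorted_pattern :: "nat \<Rightarrow> nat \<Rightarrow> nat list" where
  "sorted_pattern k i = replicate i 0 @ replicate (k - i) 1"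

definition no_sorted_subseq :: "nat \<Rightarrow> nat list \<Rightarrow> bool" where
  "no_sorted_subseq k w \<longleftrightarrow> (\<forall>i \<in> {0..k}. avoids w (sorted_pattern k i))"

definition avoiding_words :: "nat \<Rightarrow> nat \<Rightarrow> nat list set" where
  "avoiding_words k j = {w. binary_word w \<and> no_sorted_subseq k w \<and> count_list w 0 = j}"

lemma sorted_pattern_Suc: "i \<le> m \<Longrightarrow> sorted_pattern (Suc m) i = sorted_pattern m i @ [1]"
  unfolding sorted_pattern_def by (simp add: Suc_diff_le replicate_append_same)

lemma no_sorted_subseq_iff:
  "no_sorted_subseq k w \<longleftrightarrow> (\<forall>i \<le> k. \<not> subseq (sorted_pattern k i) w)"
  unfolding no_sorted_subseq_def avoids_def by auto

lemma no_sorted_subseq_count_less: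
  assumes "no_sorted_subseq k w"
  shows "count_list w 0 < k" and "count_list w 1 < k"
proof -
  have "\<not> subseq (sorted_pattern k k) w" "\<not> subseq (sorted_pattern k 0) w"
    using assms unfolding no_sorted_subseq_iff by simp_all
  then show "count_list w 0 < k" "count_list w 1 < k"
    unfolding sorted_pattern_def by (simp_all add: subseq_replicate_iff_le_count)
qed

lemma no_sorted_subseq_Suc_iff:
  "no_sorted_subseq (Suc m) w \<longleftrightarrow>
     (\<forall>i \<le> m. \<not> subseq (sorted_pattern m i @ [1]) w) \<and> count_list w 0 \<le> m"
proof -
  have all_zeros: "sorted_pattern (Suc m) (Suc m) = replicate (Suc m) 0"
    unfolding sorted_pattern_def by simp
  have "no_sorted_subseq (Suc m) w \<longleftrightarrow>
      (\<forall>i \<le> m. \<not> subseq (sorted_pattern (Suc m) i) w) \<and> \<not> subseq (sorted_pattern (Suc m) (Suc m)) w"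
    unfolding no_sorted_subseq_iff by (auto simp: le_Suc_eq)
  also have "\<dots> \<longleftrightarrow> (\<forall>i \<le> m. \<not> subseq (sorted_pattern m i @ [1]) w) \<and> count_list w 0 \<le> m"
    unfolding all_zeros subseq_replicate_iff_le_count by (simp add: sorted_pattern_Suc not_le less_Suc_eq_le)
  finally show ?thesis .
qed

lemma no_sorted_subseq_snoc_one:
  "no_sorted_subseq (Suc m) (w @ [1]) \<longleftrightarrow> no_sorted_subseq m w"
proof -
  have "(\<forall>i \<le> m. \<not> subseq (sorted_pattern m i @ [1]) (w @ [1])) \<longleftrightarrow> no_sorted_subseq m w"
    unfolding no_sorted_subseq_iff by simp
  then show ?thesis
    unfolding no_sorted_subseq_Suc_iff using no_sorted_subseq_count_less(1)[of m w] by auto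
qed

lemma no_sorted_subseq_snoc_zero:
  "no_sorted_subseq (Suc m) (w @ [0]) \<longleftrightarrow> no_sorted_subseq (Suc m) w \<and> count_list w 0 < m"
  unfolding no_sorted_subseq_Suc_iff by (auto simp: subseq_snoc_neq_iff)

lemma binary_word_snoc: "binary_word (w @ [a]) \<longleftrightarrow> binary_word w \<and> (a = 0 \<or> a = 1)"
  unfolding binary_word_def by auto

lemma Nil_in_avoiding_words_iff: "[] \<in> avoiding_words k j \<longleftrightarrow> 0 < k \<and> j = 0"
  unfolding avoiding_words_def binary_word_def no_sorted_subseq_iff sorted_pattern_def
  by (cases k) auto

lemma snoc_one_in_avoiding_words:
  "w @ [1] \<in> avoiding_words (Suc m) j \<longleftrightarrow> w \<in> avoiding_words m j"
  unfolding avoiding_words_def mem_Collect_eq binary_word_snoc no_sorted_subseq_snoc_one by simp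

lemma snoc_zero_in_avoiding_words:
  "w @ [0] \<in> avoiding_words (Suc m) j \<longleftrightarrow> 0 < j \<and> j \<le> m \<and> w \<in> avoiding_words (Suc m) (j - 1)"
  unfolding avoiding_words_def mem_Collect_eq binary_word_snoc no_sorted_subseq_snoc_zero by auto

lemma snoc_in_avoiding_words_Suc:
  "w @ [a] \<in> avoiding_words (Suc m) j \<longleftrightarrow>
     (a = 0 \<and> 0 < j \<and> j \<le> m \<and> w \<in> avoiding_words (Suc m) (j - 1)) \<or>
     (a = 1 \<and> w \<in> avoiding_words m j)"
proof -
  consider "a = 0" | "a = 1" | "a \<noteq> 0" "a \<noteq> 1" by blast
  then show ?thesis
  proof cases
    case 1
    then show ?thesis unfolding \<open>a = 0\<close> snoc_zero_in_avoiding_words by simp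
  next
    case 2
    then show ?thesis unfolding \<open>a = 1\<close> snoc_one_in_avoiding_words by simp
  next
    case 3
    then have "w @ [a] \<notin> avoiding_words (Suc m) j"
      unfolding avoiding_words_def by (simp add: binary_word_snoc)
    with 3 show ?thesis by simp
  qed
qed

lemma avoiding_words_Suc_zero:
  "avoiding_words (Suc m) 0 = insert [] ((\<lambda>w. w @ [1]) ` avoiding_words m 0)"
proof (intro set_eqI)
  fix w
  show "w \<in> avoiding_words (Suc m) 0 \<longleftrightarrow> w \<in> insert [] ((\<lambda>w. w @ [1]) ` avoiding_words m 0)"
    by (cases w rule: rev_cases) (auto simp: snoc_in_avoiding_words_Suc Nil_in_avoiding_words_iff)
qed

lemma avoiding_words_Suc_Suc:
  assumes "j < m"
  shows "avoiding_words (Suc m) (Suc j) =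
    (\<lambda>w. w @ [0]) ` avoiding_words (Suc m) j \<union> (\<lambda>w. w @ [1]) ` avoiding_words m (Suc j)"
proof (intro set_eqI)
  fix w
  show "w \<in> avoiding_words (Suc m) (Suc j) \<longleftrightarrow>
    w \<in> (\<lambda>w. w @ [0]) ` avoiding_words (Suc m) j \<union> (\<lambda>w. w @ [1]) ` avoiding_words m (Suc j)"
    using assms
    by (cases w rule: rev_cases) (auto simp: snoc_in_avoiding_words_Suc Nil_in_avoiding_words_iff)
qed

lemma avoiding_words_empty: "k \<le> j \<Longrightarrow> avoiding_words k j = {}"
  unfolding avoiding_words_def using no_sorted_subseq_count_less(1) by fastforce

lemma finite_avoiding_words: "finite (avoiding_words k j)"
proof (rule finite_subset)
  show "avoiding_words k j \<subseteq> {w. set w \<subseteq> {0, 1} \<and> length w \<le> 2 * k}"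
  proof
    fix w assume w: "w \<in> avoiding_words k j"
    then have "length w = count_list w 0 + count_list w 1"
      using sum_count_set[of w "{0, 1}"] unfolding avoiding_words_def binary_word_def by simp
    with w show "w \<in> {w. set w \<subseteq> {0, 1} \<and> length w \<le> 2 * k}"
      using no_sorted_subseq_count_less[of k w]
      unfolding avoiding_words_def binary_word_def by simp
  qed
qed (simp add: finite_lists_length_le)

lemma card_avoiding_words_Suc_zero:
  "card (avoiding_words (Suc m) 0) = Suc (card (avoiding_words m 0))"
proof -
  have "[] \<notin> (\<lambda>w. w @ [1]) ` avoiding_words m 0"
    by auto
  then show ?thesis
    unfolding avoiding_words_Suc_zero using finite_avoiding_words[of m 0]
    by (simp add: card_image inj_on_def)
qed

lemma card_avoiding_words_Suc_Suc:
  assumes "j < m"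
  shows "card (avoiding_words (Suc m) (Suc j)) =
    card (avoiding_words (Suc m) j) + card (avoiding_words m (Suc j))"
proof -
  have "(\<lambda>w. w @ [0]) ` avoiding_words (Suc m) j \<inter> (\<lambda>w. w @ [1]) ` avoiding_words m (Suc j) = {}"
    by auto
  then show ?thesis
    unfolding avoiding_words_Suc_Suc[OF assms]
    using finite_avoiding_words[of "Suc m" j] finite_avoiding_words[of m "Suc j"]
    by (simp add: card_Un_disjoint card_image inj_on_def)
qed

lemma card_avoiding_words:
  "j \<le> k \<Longrightarrow> real (card (avoiding_words k j)) = ballot k (Suc j)"
proof (induction k arbitrary: j)
  case 0
  then show ?case by (simp add: avoiding_words_empty ballot_diagonal)
next
  case (Suc m)
  note IH_m = Suc.IH
  from Suc.prems show ?case
  proof (induction j)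
    case 0
    show ?case
      using IH_m[of 0] by (simp add: card_avoiding_words_Suc_zero ballot_one)
  next
    case (Suc j)
    show ?case
    proof (cases "j < m")
      case True
      with Suc.IH IH_m[of "Suc j"] show ?thesis
        by (simp add: card_avoiding_words_Suc_Suc ballot_Suc_Suc)
    next
      case False
      with Suc.prems have "j = m" by simp
      then show ?thesis by (simp add: avoiding_words_empty ballot_diagonal)
    qed
  qed
qed

theorem corollary3p6:
  fixes k j :: nat
  assumes "k \<ge> 1" and "j \<le> k"
  shows "real (card {w. binary_word w
                      \<and> (\<forall>i \<in> {0..k}. avoids w (replicate i 0 @ replicate (k - i) 1))
                      \<and> count_list w 0 = j})
         = ballot k (j + 1)"
  using card_avoiding_words[OF \<open>j \<le> k\<close>]
  unfolding avoiding_words_def no_sorted_subseq_def sorted_pattern_def by simp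

end
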